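(* Let $(R,\mathfrak m,k)$ be a commutative noetherian local ring and $I$ an ideal with $\nu(I)=2$ and $\operatorname{grade}_R(I)=0$. Let $f_1,f_2$ be a minimal generating set of $I$, $S=R/I$, $E$ the Koszul complex on $f_1,f_2$ with $E_1$ having basis $v_1,v_2$, $\partial(v_i)=f_i$. Then the following are equivalent: (1) $I$ is a q.c.i. ideal; (2) $\mathrm H_1(E)\cong S^2$, $(0:_RI)=\Delta R$ and $(0:_R\Delta)=I$, where $\Delta=a_{11}a_{22}-a_{12}a_{21}$ for cycles $z_j=a_{1j}v_1+a_{2j}v_2$ ($j=1,2$, $a_{ij}\in R$) whose homology classes minimally generate $\mathrm H_1(E)$; (3) there exist elements $a,b,c,d\in\mathfrak m$ such that the sequence $$R^4\xrightarrow{d_3}R^3\xrightarrow{d_2}R^2\xrightarrow{d_1}R\xrightarrow{d_0}R\xrightarrow{d_1^{\mathrm T}}R^2$$ is exact, where $d_0$ is multiplication by $ad-bc$, $d_1=\begin{bmatrix} f_1& f_2\end{bmatrix}$, $$d_2=\begin{bmatrix}-f_2&a&b\\ f_1&c&d\end{bmatrix},\qquad d_3=\begin{bmatrix}-c&-d&a&b\\ f_1&0&f_2&0\\ 0&f_1&0&f_2\end{bmatrix}.$$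
   Context: $\nu(M)$ denotes minimal number of generators. An ideal $I$ of a local ring $R$ with $\nu(I)=n$, minimal generating set $f_1,\dots,f_n$, Koszul complex $E$ on $f_1,\dots,f_n$ and $S=R/I$ is a quasi-complete intersection (q.c.i.) ideal if $\mathrm H_1(E)$ is a free $S$-module and the canonical homomorphism of graded $S$-algebras $\bigwedge^S_* \mathrm H_1(E)\to \mathrm H_*(E)$ is bijective. $\operatorname{grade}_R(I)$ is the maximal length of an $R$-regular sequence in $I$. *)

theory Defs
  imports Main
begin

definition is_ideal :: "'a::comm_ring_1 set \<Rightarrow> bool" where
  "is_ideal J \<longleftrightarrow> 0 \<in> J \<and> (\<forall>x\<in>J. \<forall>y\<in>J. x + y \<in> J) \<and> (\<forall>r. \<forall>x\<in>J. r * x \<in> J)"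

definition ideal_gen :: "'a::comm_ring_1 set \<Rightarrow> 'a set" where
  "ideal_gen F = {x. \<exists>G c. finite G \<and> G \<subseteq> F \<and> x = (\<Sum>g\<in>G. c g * g)}"

definition noetherian_ring :: "'a::comm_ring_1 itself \<Rightarrow> bool" where
  "noetherian_ring _ \<longleftrightarrow>
     (\<forall>J::'a set. is_ideal J \<longrightarrow> (\<exists>F. finite F \<and> J = ideal_gen F))"

(* local ring: nonzero, and the non-units form an ideal (the maximal ideal) *)
definition local_ring :: "'a::comm_ring_1 itself \<Rightarrow> bool" where
  "local_ring _ \<longleftrightarrow> (0::'a) \<noteq> 1 \<and>
     (\<forall>x y::'a. \<not> x dvd 1 \<longrightarrow> \<not> y dvd 1 \<longrightarrow> \<not> ((x + y) dvd 1))"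

definition max_ideal :: "'a::comm_ring_1 set" where
  "max_ideal = {x. \<not> x dvd 1}"

definition ann :: "'a::comm_ring_1 set \<Rightarrow> 'a set" where
  "ann J = {x. \<forall>y\<in>J. x * y = 0}"

definition I2 :: "'a::comm_ring_1 \<Rightarrow> 'a \<Rightarrow> 'a set" where
  "I2 f1 f2 = {x * f1 + y * f2 | x y. True}"

(* Koszul complex E on f1,f2:  0 -> R -> R^2 -> R -> 0,
   E_1 = R v1 + R v2 (pairs (x,y) = x v1 + y v2), E_2 = R (v1 \<and> v2),
   d(v_i) = f_i,  d(v1 \<and> v2) = f1 v2 - f2 v1. *)
definition kz_cycle :: "'a::comm_ring_1 \<Rightarrow> 'a \<Rightarrow> 'a \<times> 'a \<Rightarrow> bool" where
  "kz_cycle f1 f2 p \<longleftrightarrow> fst p * f1 + snd p * f2 = 0"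

definition kz_bdry :: "'a::comm_ring_1 \<Rightarrow> 'a \<Rightarrow> 'a \<Rightarrow> 'a \<Rightarrow> bool" where
  "kz_bdry f1 f2 x y \<longleftrightarrow> (\<exists>r. x = - (r * f2) \<and> y = r * f1)"

(* 2-cycles of E (= H_2(E), as there are no 3-chains) *)
definition kz_H2 :: "'a::comm_ring_1 \<Rightarrow> 'a \<Rightarrow> 'a set" where
  "kz_H2 f1 f2 = {w. w * f1 = 0 \<and> w * f2 = 0}"

(* product z \<and> z' of two 1-chains, as coefficient of v1 \<and> v2 *)
definition kz_wedge :: "'a::comm_ring_1 \<times> 'a \<Rightarrow> 'a \<times> 'a \<Rightarrow> 'a" where
  "kz_wedge p q = fst p * snd q - snd p * fst q"

definition lincomb :: "(nat \<Rightarrow> 'a::comm_ring_1) \<Rightarrow> (nat \<Rightarrow> 'a \<times> 'a) \<Rightarrow> nat \<Rightarrow> 'a \<times> 'a" where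
  "lincomb c z r = ((\<Sum>i<r. c i * fst (z i)), (\<Sum>i<r. c i * snd (z i)))"

definition H1_generates :: "'a::comm_ring_1 \<Rightarrow> 'a \<Rightarrow> (nat \<Rightarrow> 'a \<times> 'a) \<Rightarrow> nat \<Rightarrow> bool" where
  "H1_generates f1 f2 z r \<longleftrightarrow> (\<forall>i<r. kz_cycle f1 f2 (z i)) \<and>
     (\<forall>p. kz_cycle f1 f2 p \<longrightarrow>
        (\<exists>c. kz_bdry f1 f2 (fst p - fst (lincomb c z r)) (snd p - snd (lincomb c z r))))"

(* the classes are linearly independent over S = R/I *)
definition H1_indep :: "'a::comm_ring_1 \<Rightarrow> 'a \<Rightarrow> (nat \<Rightarrow> 'a \<times> 'a) \<Rightarrow> nat \<Rightarrow> bool" where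
  "H1_indep f1 f2 z r \<longleftrightarrow>
     (\<forall>c. kz_bdry f1 f2 (fst (lincomb c z r)) (snd (lincomb c z r)) \<longrightarrow>
        (\<forall>i<r. c i \<in> I2 f1 f2))"

definition H1_basis :: "'a::comm_ring_1 \<Rightarrow> 'a \<Rightarrow> (nat \<Rightarrow> 'a \<times> 'a) \<Rightarrow> nat \<Rightarrow> bool" where
  "H1_basis f1 f2 z r \<longleftrightarrow> H1_generates f1 f2 z r \<and> H1_indep f1 f2 z r"

definition H1_min_gens :: "'a::comm_ring_1 \<Rightarrow> 'a \<Rightarrow> (nat \<Rightarrow> 'a \<times> 'a) \<Rightarrow> nat \<Rightarrow> bool" where
  "H1_min_gens f1 f2 z r \<longleftrightarrow> H1_generates f1 f2 z r \<and>
     (\<forall>r'<r. \<forall>z'. \<not> H1_generates f1 f2 z' r')"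

(* Quasi-complete intersection for I = (f1,f2), unfolded for the 2-term Koszul complex:
   H_1(E) is S-free with basis [z_0],...,[z_{r-1}], and the canonical map
   \<And>^j_S H_1(E) -> H_j(E) is bijective for all j.  In degrees 0 and 1 it is the
   identity.  In degree 2, \<And>^2 H_1 is S-free on [z_i]\<and>[z_k] (i<k), mapped to the class
   of z_i \<and> z_k in H_2(E) = kz_H2.  For j \<ge> 3, H_j(E) = 0, and \<And>^j H_1 is the S-free
   module on j-subsets of {0..r-1}; bijectivity means that module is zero, i.e. every
   R-coefficient family on j-subsets has all coefficients in I. *)
definition qci2 :: "'a::comm_ring_1 \<Rightarrow> 'a \<Rightarrow> bool" where
  "qci2 f1 f2 \<longleftrightarrow> (\<exists>r z. H1_basis f1 f2 z r \<and>
     (\<forall>w\<in>kz_H2 f1 f2. \<exists>c. w = (\<Sum>i<r. \<Sum>k\<in>{i<..<r}. c i k * kz_wedge (z i) (z k))) \<and>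
     (\<forall>c. (\<Sum>i<r. \<Sum>k\<in>{i<..<r}. c i k * kz_wedge (z i) (z k)) = 0 \<longrightarrow>
          (\<forall>i k. i < k \<and> k < r \<longrightarrow> c i k \<in> I2 f1 f2)) \<and>
     (\<forall>j\<ge>3. \<forall>c :: nat set \<Rightarrow> 'a.
          (\<forall>J. c J \<noteq> 0 \<longrightarrow> J \<subseteq> {..<r} \<and> card J = j) \<longrightarrow> (\<forall>J. c J \<in> I2 f1 f2)))"

definition cond2 :: "'a::comm_ring_1 \<Rightarrow> 'a \<Rightarrow> bool" where
  "cond2 f1 f2 \<longleftrightarrow> (\<exists>w. H1_basis f1 f2 w 2) \<and>
     (\<exists>z. H1_min_gens f1 f2 z 2 \<and>
        (let \<Delta> = kz_wedge (z 0) (z 1) in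
           ann (I2 f1 f2) = {\<Delta> * r | r. True} \<and> ann {\<Delta>} = I2 f1 f2))"

(* Condition (3): exactness of R^4 -d3-> R^3 -d2-> R^2 -d1-> R -d0-> R -d1^T-> R^2
   (matrices acting on column vectors) *)
definition cond3 :: "'a::comm_ring_1 \<Rightarrow> 'a \<Rightarrow> bool" where
  "cond3 f1 f2 \<longleftrightarrow> (\<exists>a b c d. a \<in> max_ideal \<and> b \<in> max_ideal \<and> c \<in> max_ideal \<and> d \<in> max_ideal \<and>
     \<comment> \<open>exact at R^3: ker d2 = im d3\<close>
     (\<forall>y1 y2 y3. (- (f2 * y1) + a * y2 + b * y3 = 0 \<and> f1 * y1 + c * y2 + d * y3 = 0) \<longleftrightarrow>
        (\<exists>x1 x2 x3 x4. y1 = - (c * x1) - d * x2 + a * x3 + b * x4 \<and>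
                       y2 = f1 * x1 + f2 * x3 \<and> y3 = f1 * x2 + f2 * x4)) \<and>
     \<comment> \<open>exact at R^2: ker d1 = im d2\<close>
     (\<forall>u1 u2. f1 * u1 + f2 * u2 = 0 \<longleftrightarrow>
        (\<exists>y1 y2 y3. u1 = - (f2 * y1) + a * y2 + b * y3 \<and> u2 = f1 * y1 + c * y2 + d * y3)) \<and>
     \<comment> \<open>exact at the first R: ker d0 = im d1\<close>
     (\<forall>t. (a * d - b * c) * t = 0 \<longleftrightarrow> (\<exists>u1 u2. t = f1 * u1 + f2 * u2)) \<and>
     \<comment> \<open>exact at the second R: ker d1^T = im d0\<close>
     (\<forall>s. (f1 * s = 0 \<and> f2 * s = 0) \<longleftrightarrow> (\<exists>t. s = (a * d - b * c) * t)))"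

end

theory Submission
  imports Defs
begin

text \<open>
  All three conditions are reduced to one normal form: \<open>H\<^sub>1(E)\<close> is free on the classes of two
  cycles \<open>z\<^sub>0, z\<^sub>1\<close>, and \<open>I\<close> and \<open>\<Delta>R\<close>, where \<open>\<Delta> = z\<^sub>0 \<and> z\<^sub>1\<close>, are each other's annihilators.
  For (2), any two cycles generating \<open>H\<^sub>1(E)\<close> form a basis once some basis of rank two exists:
  the transition matrices are inverse to each other modulo \<open>I\<close>, so their determinants are units
  because \<open>R\<close> is local. For (1), the vanishing of \<open>\<And>\<^sup>3 H\<^sub>1(E)\<close> forces rank at most two, and
  grade zero gives \<open>H\<^sub>2(E) = (0 : I) \<noteq> 0\<close>, which rules out rank at most one; in rank two,
  bijectivity of \<open>\<And>\<^sup>2 H\<^sub>1(E) \<rightarrow> H\<^sub>2(E)\<close> is exactly the annihilator condition. For (3), with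
  \<open>z\<^sub>0 = (a, c)\<close> and \<open>z\<^sub>1 = (b, d)\<close>, exactness at \<open>R\<^sup>2\<close> says that the \<open>z\<^sub>i\<close> generate, exactness at \<open>R\<^sup>3\<close>
  that they are independent, and exactness at the two copies of \<open>R\<close> is the annihilator condition.
\<close>

section \<open>The ideal \<open>(f\<^sub>1, f\<^sub>2)\<close>\<close>

lemma I2_iff: "x \<in> I2 f1 f2 \<longleftrightarrow> (\<exists>a b. x = a * f1 + b * f2)"
  by (auto simp: I2_def)

lemma I2_lincomb:
  assumes "x \<in> I2 f1 f2" "y \<in> I2 f1 f2"
  shows "a * x + b * y \<in> I2 f1 f2"
proof -
  from assms obtain s t s' t' where "x = s * f1 + t * f2" "y = s' * f1 + t' * f2"
    by (auto simp: I2_iff)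
  then have "a * x + b * y = (a * s + b * s') * f1 + (a * t + b * t') * f2"
    by (simp add: algebra_simps)
  then show ?thesis by (auto simp: I2_iff)
qed

lemma I2_mult: "x \<in> I2 f1 f2 \<Longrightarrow> r * x \<in> I2 f1 f2"
  using I2_lincomb[of x f1 f2 x r 0] by simp

lemma I2_add: "x \<in> I2 f1 f2 \<Longrightarrow> y \<in> I2 f1 f2 \<Longrightarrow> x + y \<in> I2 f1 f2"
  using I2_lincomb[of x f1 f2 y 1 1] by simp

lemma generator_in_I2: "f1 \<in> I2 f1 f2" "f2 \<in> I2 f1 f2"
  unfolding I2_iff by (metis add_0 add.right_neutral mult_1 mult_zero_left)+

lemma zero_in_I2: "0 \<in> I2 f1 f2"
  using I2_mult[OF generator_in_I2(1), of 0] by simp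

lemma ann_I2: "ann (I2 f1 f2) = {s. s * f1 = 0 \<and> s * f2 = 0}"
proof (intro set_eqI iffI)
  fix s assume "s \<in> ann (I2 f1 f2)"
  then show "s \<in> {s. s * f1 = 0 \<and> s * f2 = 0}"
    using generator_in_I2 unfolding ann_def by blast
next
  fix s assume "s \<in> {s. s * f1 = 0 \<and> s * f2 = 0}"
  moreover have "s * (a * f1 + b * f2) = a * (s * f1) + b * (s * f2)" for a b
    by (simp add: algebra_simps)
  ultimately show "s \<in> ann (I2 f1 f2)" by (auto simp: ann_def I2_def)
qed

lemma one_notin_I2_if_not_principal:
  assumes "\<not> (\<exists>g. I2 f1 f2 = {r * g | r. True})"
  shows "(1::'a::comm_ring_1) \<notin> I2 f1 f2"
proof
  assume "1 \<in> I2 f1 f2"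
  then have "I2 f1 f2 = {r * 1 | r. True}" using I2_mult by fastforce
  with assms show False by blast
qed

lemma I2_not_unit:
  assumes "(1::'a::comm_ring_1) \<notin> I2 f1 f2" "x \<in> I2 f1 f2"
  shows "\<not> x dvd 1"
proof
  assume "x dvd 1"
  then obtain k where "1 = k * x" by (metis dvdE mult.commute)
  with assms show False using I2_mult[of x f1 f2 k] by simp
qed

lemma local_unit_add_nonunit:
  assumes "local_ring TYPE('a)" "u dvd 1" "\<not> x dvd 1"
  shows "(u + x) dvd (1::'a::comm_ring_1)"
proof (rule ccontr)
  assume "\<not> (u + x) dvd 1"
  moreover have "\<not> (- x) dvd 1" using assms(3) by simp
  ultimately have "\<not> (u + x + - x) dvd 1"
    using assms(1) unfolding local_ring_def by blast
  with assms(2) show False by simp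
qed

section \<open>Associated primes in noetherian rings\<close>

lemma is_ideal_annihilator: "is_ideal {t. t * x = (0::'a::comm_ring_1)}"
  by (auto simp: is_ideal_def distrib_right mult.assoc)

lemma ideal_gen_subset: "is_ideal J \<Longrightarrow> F \<subseteq> J \<Longrightarrow> ideal_gen F \<subseteq> J"
proof
  fix x assume J: "is_ideal J" and "F \<subseteq> J" "x \<in> ideal_gen F"
  then obtain G c where G: "finite G" "G \<subseteq> J" "x = (\<Sum>g\<in>G. c g * g)"
    unfolding ideal_gen_def by blast
  have "(\<Sum>g\<in>G. c g * g) \<in> J" using G(1,2)
    by (induction G rule: finite_induct) (use J in \<open>auto simp: is_ideal_def\<close>)
  with G(3) show "x \<in> J" by simp
qed

lemma ideal_gen_superset: "F \<subseteq> ideal_gen F"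
  unfolding ideal_gen_def by (force intro: exI[of _ "\<lambda>_. 1"])

lemma is_ideal_Union_chain:
  fixes s :: "nat \<Rightarrow> 'a::comm_ring_1 set"
  assumes "\<And>n. is_ideal (s n)" "mono s"
  shows "is_ideal (\<Union>(range s))"
  unfolding is_ideal_def
proof (intro conjI ballI allI)
  show "0 \<in> \<Union>(range s)" using assms(1)[of 0] by (auto simp: is_ideal_def)
next
  fix x y assume "x \<in> \<Union>(range s)" "y \<in> \<Union>(range s)"
  then obtain m n where "x \<in> s m" "y \<in> s n" by auto
  then have "x \<in> s (max m n)" "y \<in> s (max m n)"
    using monoD[OF assms(2), of m "max m n"] monoD[OF assms(2), of n "max m n"] by auto
  then have "x + y \<in> s (max m n)" using assms(1)[of "max m n"] by (simp add: is_ideal_def)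
  then show "x + y \<in> \<Union>(range s)" by blast
next
  fix r x assume "x \<in> \<Union>(range s)"
  then obtain n where "x \<in> s n" by blast
  then have "r * x \<in> s n" using assms(1)[of n] by (simp add: is_ideal_def)
  then show "r * x \<in> \<Union>(range s)" by blast
qed

lemma noetherian_chain_stabilizes:
  fixes s :: "nat \<Rightarrow> 'a::comm_ring_1 set"
  assumes noeth: "noetherian_ring TYPE('a)"
    and ideals: "\<And>n. is_ideal (s n)" and chain: "\<And>n. s n \<subseteq> s (Suc n)"
  shows "\<exists>N. s (Suc N) \<subseteq> s N"
proof -
  have mono: "mono s" using chain by (simp add: mono_iff_le_Suc)
  have "is_ideal (\<Union>(range s))" by (rule is_ideal_Union_chain[OF ideals mono])
  then have "\<exists>F. finite F \<and> \<Union>(range s) = ideal_gen F"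
    by (rule noeth[unfolded noetherian_ring_def, rule_format])
  then obtain F where F: "finite F" "\<Union>(range s) = ideal_gen F" by (elim exE conjE)
  have "\<forall>f\<in>F. \<exists>n. f \<in> s n" using ideal_gen_superset[of F] unfolding F(2)[symmetric] by blast
  from bchoice[OF this] obtain n where n: "\<forall>f\<in>F. f \<in> s (n f)" ..
  define N where "N = (\<Sum>f\<in>F. n f)"
  have "F \<subseteq> s N"
  proof
    fix f assume "f \<in> F"
    then have "n f \<le> N" unfolding N_def using F(1) by (intro member_le_sum) auto
    then have "s (n f) \<subseteq> s N" by (rule monoD[OF mono])
    then show "f \<in> s N" using n \<open>f \<in> F\<close> by blast
  qed
  then have "ideal_gen F \<subseteq> s N" by (rule ideal_gen_subset[OF ideals])
  moreover have "s (Suc N) \<subseteq> \<Union>(range s)" by blast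
  ultimately have "s (Suc N) \<subseteq> s N" using F(2) by simp
  then show ?thesis ..
qed

lemma noetherian_maximal_ideal:
  fixes \<F> :: "'a::comm_ring_1 set set"
  assumes noeth: "noetherian_ring TYPE('a)" and "\<F> \<noteq> {}" and "\<forall>A\<in>\<F>. is_ideal A"
  shows "\<exists>M\<in>\<F>. \<forall>A\<in>\<F>. M \<subseteq> A \<longrightarrow> A = M"
proof (rule ccontr)
  assume "\<not> ?thesis"
  then have "\<forall>M\<in>\<F>. \<exists>A. A \<in> \<F> \<and> M \<subset> A" by blast
  from bchoice[OF this] obtain enlarge
    where enlarge: "\<forall>M\<in>\<F>. enlarge M \<in> \<F> \<and> M \<subset> enlarge M" by blast
  obtain A0 where A0: "A0 \<in> \<F>" using assms(2) by blast
  define s where "s n = (enlarge ^^ n) A0" for n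
  have s_in: "s n \<in> \<F>" for n by (induction n) (auto simp: s_def A0 enlarge)
  have strict: "s n \<subset> s (Suc n)" for n using enlarge s_in[of n] by (simp add: s_def)
  have "is_ideal (s n)" for n using assms(3) s_in[of n] by blast
  moreover have "s n \<subseteq> s (Suc n)" for n using strict[of n] by (rule psubset_imp_subset)
  ultimately obtain N where "s (Suc N) \<subseteq> s N"
    using noetherian_chain_stabilizes[OF noeth] by blast
  with strict[of N] have "s N \<subset> s N" by (rule psubset_subset_trans)
  then show False by simp
qed

text \<open>\<open>ann_prime x\<close> says that \<open>(0 : x)\<close> is an associated prime of \<open>R\<close>.\<close>

definition ann_prime :: "'a::comm_ring_1 \<Rightarrow> bool" where
  "ann_prime x \<longleftrightarrow> x \<noteq> 0 \<and> (\<forall>a b. a * b * x = 0 \<longrightarrow> a * x = 0 \<or> b * x = 0)"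

lemma zero_divisor_in_ann_prime:
  fixes g y :: "'a::comm_ring_1"
  assumes noeth: "noetherian_ring TYPE('a)" and "y \<noteq> 0" "g * y = 0"
  shows "\<exists>x. ann_prime x \<and> g * x = 0"
proof -
  define \<F> where "\<F> = {{t. t * x = 0} | x. x \<noteq> 0 \<and> g * x = 0}"
  have "\<F> \<noteq> {}" using assms(2,3) unfolding \<F>_def by blast
  moreover have "\<forall>A\<in>\<F>. is_ideal A" unfolding \<F>_def using is_ideal_annihilator by blast
  ultimately obtain M where M: "M \<in> \<F>" "\<forall>A\<in>\<F>. M \<subseteq> A \<longrightarrow> A = M"
    using noetherian_maximal_ideal[OF noeth] by blast
  then obtain x where x: "M = {t. t * x = 0}" "x \<noteq> 0" "g * x = 0" unfolding \<F>_def by blast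
  have prime: "a * x = 0 \<or> b * x = 0" if abx: "a * b * x = 0" for a b
  proof (rule ccontr)
    assume "\<not> (a * x = 0 \<or> b * x = 0)"
    then have "a * x \<noteq> 0" "b * x \<noteq> 0" by auto
    have "g * (a * x) = 0" using x(3) by (simp add: mult.left_commute)
    with \<open>a * x \<noteq> 0\<close> have "{t. t * (a * x) = 0} \<in> \<F>" unfolding \<F>_def by blast
    moreover have "M \<subseteq> {t. t * (a * x) = 0}" using x(1) by (auto simp: mult.left_commute[of _ a])
    ultimately have "{t. t * (a * x) = 0} = M" using M(2) by blast
    moreover have "b * (a * x) = 0" using abx by (simp add: ac_simps)
    ultimately show False using x(1) \<open>b * x \<noteq> 0\<close> by blast
  qed
  show ?thesis unfolding ann_prime_def using prime x(2,3) by blast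
qed

lemma ann_prime_power:
  assumes "ann_prime x"
  shows "f ^ Suc n * x = 0 \<Longrightarrow> f * x = 0"
proof (induction n)
  case (Suc n)
  then show ?case using assms unfolding ann_prime_def by (metis power_Suc)
qed simp

lemma ann_prime_prod:
  fixes n :: nat
  assumes "ann_prime x"
  shows "(\<Prod>k<n. g k) * x = 0 \<Longrightarrow> \<exists>k<n. g k * x = 0"
proof (induction n)
  case 0
  then show ?case using assms by (simp add: ann_prime_def)
next
  case (Suc n)
  then have "(\<Prod>k<n. g k) * g n * x = 0" by (simp add: mult.commute)
  then show ?case using assms Suc.IH less_Suc_eq unfolding ann_prime_def by blast
qed

lemma ann_prime_kills_summands:
  fixes f h x :: "'a::comm_ring_1"
  assumes local: "local_ring TYPE('a)" and "\<not> f dvd 1" and "ann_prime x"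
    and k: "(f ^ Suc k + h) * x = 0" and l: "(f ^ Suc l + h) * x = 0" and "k < l"
  shows "f * x = 0 \<and> h * x = 0"
proof -
  obtain m where "l = k + Suc m" using \<open>k < l\<close> less_iff_Suc_add by auto
  then have "Suc l = Suc k + Suc m" by simp
  then have pow: "f ^ Suc l = f ^ Suc k * f ^ Suc m" by (simp only: power_add)
  have "\<not> (- (f ^ Suc m)) dvd 1" using \<open>\<not> f dvd 1\<close> by (auto dest: dvd_mult_left)
  then have "(1 + - (f ^ Suc m)) dvd 1" by (rule local_unit_add_nonunit[OF local one_dvd])
  then obtain v where v: "(1 + - (f ^ Suc m)) * v = 1" by (metis dvdE)
  have "f ^ Suc k * (1 + - (f ^ Suc m)) * x = (f ^ Suc k + h) * x - (f ^ Suc l + h) * x"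
    unfolding pow by (simp add: algebra_simps)
  then have "f ^ Suc k * (1 + - (f ^ Suc m)) * x * v = 0" using k l by simp
  then have "f ^ Suc k * x * ((1 + - (f ^ Suc m)) * v) = 0" by (simp only: ac_simps)
  then have "f ^ Suc k * x = 0" using v by simp
  then have "f * x = 0" by (rule ann_prime_power[OF \<open>ann_prime x\<close>])
  moreover have "(f ^ Suc l + h) * x = f ^ l * (f * x) + h * x" by (simp add: algebra_simps)
  ultimately show ?thesis using l by simp
qed

text \<open>
  A noetherian ring has no infinite sequence of such primes: the annihilators of the partial
  products of \<open>g\<close> stabilise, so the prime \<open>(0 : x N)\<close> contains some earlier \<open>g k\<close>.
\<close>

lemma noetherian_ann_prime_sequence:
  fixes g x :: "nat \<Rightarrow> 'a::comm_ring_1"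
  assumes noeth: "noetherian_ring TYPE('a)"
    and prime: "\<And>k. ann_prime (x k)" and kills: "\<And>k. g k * x k = 0"
  shows "\<exists>k N. k < N \<and> g k * x N = 0"
proof -
  define A where "A n = {t. t * (\<Prod>k<n. g k) = 0}" for n
  have "is_ideal (A n)" for n unfolding A_def by (rule is_ideal_annihilator)
  moreover have "A n \<subseteq> A (Suc n)" for n
  proof
    fix t assume "t \<in> A n"
    moreover have "t * (\<Prod>k<Suc n. g k) = t * (\<Prod>k<n. g k) * g n" by (simp add: mult.assoc)
    ultimately show "t \<in> A (Suc n)" by (simp add: A_def)
  qed
  ultimately obtain N where N: "A (Suc N) \<subseteq> A N"
    using noetherian_chain_stabilizes[OF noeth] by blast
  have "x N * (\<Prod>k<Suc N. g k) = (\<Prod>k<N. g k) * (g N * x N)" by (simp add: ac_simps)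
  then have "x N \<in> A (Suc N)" using kills[of N] by (simp add: A_def)
  with N have "(\<Prod>k<N. g k) * x N = 0" by (auto simp: A_def mult.commute)
  then show ?thesis using ann_prime_prod[OF prime] by blast
qed

text \<open>
  Prime avoidance: each \<open>f\<^sub>1\<^sup>k\<^sup>+\<^sup>1 + f\<^sub>2\<close> lies in an associated prime, and an associated prime
  containing two of them contains \<open>f\<^sub>1\<close> and \<open>f\<^sub>2\<close>.
\<close>

lemma ann_I2_nonzero:
  fixes f1 f2 :: "'a::comm_ring_1"
  assumes noeth: "noetherian_ring TYPE('a)" and local: "local_ring TYPE('a)"
    and proper: "1 \<notin> I2 f1 f2"
    and zero_divisors: "\<forall>x\<in>I2 f1 f2. \<exists>y. y \<noteq> 0 \<and> x * y = 0"
  shows "\<exists>x. x \<noteq> 0 \<and> x * f1 = 0 \<and> x * f2 = 0"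
proof (rule ccontr)
  assume no_ann: "\<not> ?thesis"
  define g where "g k = f1 ^ Suc k + f2" for k
  have "\<exists>x. ann_prime x \<and> g k * x = 0" for k
  proof -
    have "g k \<in> I2 f1 f2"
      unfolding g_def power_Suc2 using I2_add[OF I2_mult[OF generator_in_I2(1)] generator_in_I2(2)] .
    then obtain y where "y \<noteq> 0" "g k * y = 0" using zero_divisors by blast
    then show ?thesis by (rule zero_divisor_in_ann_prime[OF noeth])
  qed
  then have "\<forall>k. \<exists>x. ann_prime x \<and> g k * x = 0" ..
  from choice[OF this] obtain x where x: "\<And>k. ann_prime (x k)" "\<And>k. g k * x k = 0" by blast
  obtain k N where "k < N" "g k * x N = 0"
    using noetherian_ann_prime_sequence[OF noeth x] by blast
  have "\<not> f1 dvd 1" by (rule I2_not_unit[OF proper generator_in_I2(1)])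
  with \<open>k < N\<close> \<open>g k * x N = 0\<close> x(2)[of N] have "f1 * x N = 0 \<and> f2 * x N = 0"
    using ann_prime_kills_summands[OF local _ x(1)[of N]] unfolding g_def by blast
  then have "x N * f1 = 0" "x N * f2 = 0" by (simp_all add: mult.commute)
  moreover have "x N \<noteq> 0" using x(1)[of N] unfolding ann_prime_def by blast
  ultimately show False using no_ann by blast
qed

section \<open>The first homology of the Koszul complex\<close>

definition chain_comb :: "'a::comm_ring_1 \<Rightarrow> 'a \<Rightarrow> 'a \<times> 'a \<Rightarrow> 'a \<times> 'a \<Rightarrow> 'a \<times> 'a" where
  "chain_comb c0 c1 p q = (c0 * fst p + c1 * fst q, c0 * snd p + c1 * snd q)"

definition homologous :: "'a::comm_ring_1 \<Rightarrow> 'a \<Rightarrow> 'a \<times> 'a \<Rightarrow> 'a \<times> 'a \<Rightarrow> bool" where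
  "homologous f1 f2 p q \<longleftrightarrow> kz_bdry f1 f2 (fst p - fst q) (snd p - snd q)"

lemma homologous_zero_iff: "homologous f1 f2 (x, y) (0, 0) \<longleftrightarrow> kz_bdry f1 f2 x y"
  by (simp add: homologous_def)

lemma homologous_refl: "homologous f1 f2 p p"
  unfolding homologous_def kz_bdry_def by (rule exI[of _ 0]) simp

lemma homologous_sym: "homologous f1 f2 p q \<Longrightarrow> homologous f1 f2 q p"
  unfolding homologous_def kz_bdry_def by (metis minus_diff_eq minus_mult_left)

lemma homologous_trans:
  "homologous f1 f2 p q \<Longrightarrow> homologous f1 f2 q u \<Longrightarrow> homologous f1 f2 p u"
  unfolding homologous_def kz_bdry_def
proof (elim exE conjE)
  fix r s
  assume "fst p - fst q = - (r * f2)" "snd p - snd q = r * f1"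
    and "fst q - fst u = - (s * f2)" "snd q - snd u = s * f1"
  then have "fst p - fst u = - ((r + s) * f2) \<and> snd p - snd u = (r + s) * f1"
    by (simp add: algebra_simps) (metis add_diff_cancel_right diff_add_cancel add.commute)
  then show "\<exists>t. fst p - fst u = - (t * f2) \<and> snd p - snd u = t * f1" ..
qed

lemma homologous_chain_comb:
  assumes "homologous f1 f2 p p'" "homologous f1 f2 q q'"
  shows "homologous f1 f2 (chain_comb a b p q) (chain_comb a b p' q')"
proof -
  from assms obtain r s where
    "fst p - fst p' = - (r * f2)" "snd p - snd p' = r * f1"
    "fst q - fst q' = - (s * f2)" "snd q - snd q' = s * f1"
    unfolding homologous_def kz_bdry_def by blast
  then have p: "fst p = fst p' - r * f2" "snd p = snd p' + r * f1"
    and q: "fst q = fst q' - s * f2" "snd q = snd q' + s * f1"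
    by (simp_all add: algebra_simps)
  have "a * fst p + b * fst q - (a * fst p' + b * fst q') = - ((a * r + b * s) * f2)"
    "a * snd p + b * snd q - (a * snd p' + b * snd q') = (a * r + b * s) * f1"
    unfolding p q by (simp_all add: algebra_simps)
  then show ?thesis unfolding homologous_def kz_bdry_def chain_comb_def by auto
qed

lemma chain_comb_chain_comb:
  "chain_comb a b (chain_comb m00 m01 p q) (chain_comb m10 m11 p q) =
    chain_comb (a * m00 + b * m10) (a * m01 + b * m11) p q"
  by (simp add: chain_comb_def algebra_simps)

lemma chain_comb_unit_vectors: "chain_comb 1 0 p q = p" "chain_comb 0 1 p q = q"
  by (simp_all add: chain_comb_def)

lemma homologous_chain_comb_iff:
  "homologous f1 f2 (chain_comb a b p q) (chain_comb a' b' p q) \<longleftrightarrow>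
    homologous f1 f2 (chain_comb (a - a') (b - b') p q) (0, 0)"
  by (simp add: homologous_def chain_comb_def algebra_simps)

lemma ex_fun_at_0_1: "(\<exists>c :: nat \<Rightarrow> 'b. P (c 0) (c 1)) \<longleftrightarrow> (\<exists>x y. P x y)"
proof
  assume "\<exists>x y. P x y"
  then obtain x y where "P x y" by blast
  then show "\<exists>c :: nat \<Rightarrow> 'b. P (c 0) (c 1)"
    by (intro exI[of _ "\<lambda>i. if i = 0 then x else y"]) simp
qed blast

lemma all_fun_at_0_1: "(\<forall>c :: nat \<Rightarrow> 'b. P (c 0) (c 1)) \<longleftrightarrow> (\<forall>x y. P x y)"
  using ex_fun_at_0_1[of "\<lambda>x y. \<not> P x y"] by blast

lemma all_less_2: "(\<forall>i<2. P (i::nat)) \<longleftrightarrow> P 0 \<and> P 1"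
  by (auto simp: less_2_cases_iff)

lemma lincomb_2: "lincomb c z 2 = chain_comb (c 0) (c 1) (z 0) (z 1)"
  by (simp add: lincomb_def chain_comb_def numeral_2_eq_2)

lemma H1_generates_2_iff:
  "H1_generates f1 f2 z 2 \<longleftrightarrow> kz_cycle f1 f2 (z 0) \<and> kz_cycle f1 f2 (z 1) \<and>
    (\<forall>p. kz_cycle f1 f2 p \<longrightarrow> (\<exists>c0 c1. homologous f1 f2 p (chain_comb c0 c1 (z 0) (z 1))))"
  unfolding H1_generates_def all_less_2 lincomb_2 homologous_def[symmetric]
  by (simp only: ex_fun_at_0_1[where P = "\<lambda>x y. homologous f1 f2 _ (chain_comb x y (z 0) (z 1))"]
      conj_assoc)

lemma H1_indep_2_iff:
  "H1_indep f1 f2 z 2 \<longleftrightarrow> (\<forall>c0 c1. homologous f1 f2 (chain_comb c0 c1 (z 0) (z 1)) (0, 0) \<longrightarrow>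
    c0 \<in> I2 f1 f2 \<and> c1 \<in> I2 f1 f2)"
  unfolding H1_indep_def all_less_2 lincomb_2 homologous_zero_iff[symmetric] prod.collapse
  by (rule all_fun_at_0_1)

lemma H1_indep_coeff_diff:
  assumes "H1_indep f1 f2 w 2"
    and "homologous f1 f2 (chain_comb a b (w 0) (w 1)) (chain_comb a' b' (w 0) (w 1))"
  shows "a - a' \<in> I2 f1 f2" "b - b' \<in> I2 f1 f2"
  using assms by (simp_all add: H1_indep_2_iff homologous_chain_comb_iff)

lemma det2_unit_of_inverse_mod_I2:
  fixes f1 f2 :: "'a::comm_ring_1"
  assumes local: "local_ring TYPE('a)" and proper: "1 \<notin> I2 f1 f2"
    and e00: "n00 * m00 + n01 * m10 - 1 \<in> I2 f1 f2" and e01: "n00 * m01 + n01 * m11 \<in> I2 f1 f2"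
    and e10: "n10 * m00 + n11 * m10 \<in> I2 f1 f2" and e11: "n10 * m01 + n11 * m11 - 1 \<in> I2 f1 f2"
  shows "(m00 * m11 - m01 * m10) dvd 1"
proof -
  define e where "e = (n00 * m00 + n01 * m10 - 1) + (n10 * m01 + n11 * m11 - 1)
      + (n00 * m00 + n01 * m10 - 1) * (n10 * m01 + n11 * m11 - 1)
      - (n00 * m01 + n01 * m11) * (n10 * m00 + n11 * m10)"
  have det: "(n00 * n11 - n01 * n10) * (m00 * m11 - m01 * m10) = 1 + e"
    unfolding e_def by (simp add: algebra_simps)
  have "e = 1 * (1 * (n00 * m00 + n01 * m10 - 1) + (n00 * m00 + n01 * m10) * (n10 * m01 + n11 * m11 - 1))
      + (- (n00 * m01 + n01 * m11)) * (n10 * m00 + n11 * m10)"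
    unfolding e_def by (simp add: algebra_simps)
  also have "\<dots> \<in> I2 f1 f2" by (intro I2_lincomb e00 e01 e10 e11)
  finally have "e \<in> I2 f1 f2" .
  then have "(1 + e) dvd 1" by (rule local_unit_add_nonunit[OF local one_dvd I2_not_unit[OF proper]])
  then show ?thesis unfolding det[symmetric] by (rule dvd_mult_right)
qed

lemma H1_indep_transfer:
  assumes indep: "H1_indep f1 f2 w 2"
    and z0: "homologous f1 f2 (z 0) (chain_comb m00 m01 (w 0) (w 1))"
    and z1: "homologous f1 f2 (z 1) (chain_comb m10 m11 (w 0) (w 1))"
    and unit: "(m00 * m11 - m01 * m10) dvd 1"
  shows "H1_indep f1 f2 z 2"
  unfolding H1_indep_2_iff
proof (intro allI impI)
  fix c0 c1
  assume "homologous f1 f2 (chain_comb c0 c1 (z 0) (z 1)) (0, 0)"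
  moreover have "homologous f1 f2 (chain_comb c0 c1 (z 0) (z 1))
      (chain_comb (c0 * m00 + c1 * m10) (c0 * m01 + c1 * m11) (w 0) (w 1))"
    using homologous_chain_comb[OF z0 z1] by (simp only: chain_comb_chain_comb)
  ultimately have "homologous f1 f2 (chain_comb (c0 * m00 + c1 * m10) (c0 * m01 + c1 * m11) (w 0) (w 1)) (0, 0)"
    by (blast intro: homologous_trans homologous_sym)
  then have e0: "c0 * m00 + c1 * m10 \<in> I2 f1 f2" and e1: "c0 * m01 + c1 * m11 \<in> I2 f1 f2"
    using indep by (simp_all add: H1_indep_2_iff)
  obtain v where v: "(m00 * m11 - m01 * m10) * v = 1" using unit by (metis dvdE)
  have "c0 = c0 * ((m00 * m11 - m01 * m10) * v)" using v by simp
  also have "\<dots> = (v * m11) * (c0 * m00 + c1 * m10) + (- (v * m10)) * (c0 * m01 + c1 * m11)"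
    by (simp add: algebra_simps)
  finally have c0: "c0 \<in> I2 f1 f2" by (rule ssubst[where P = "\<lambda>x. x \<in> I2 f1 f2"]) (rule I2_lincomb[OF e0 e1])
  have "c1 = c1 * ((m00 * m11 - m01 * m10) * v)" using v by simp
  also have "\<dots> = (v * m00) * (c0 * m01 + c1 * m11) + (- (v * m01)) * (c0 * m00 + c1 * m10)"
    by (simp add: algebra_simps)
  finally have "c1 \<in> I2 f1 f2" by (rule ssubst[where P = "\<lambda>x. x \<in> I2 f1 f2"]) (rule I2_lincomb[OF e1 e0])
  with c0 show "c0 \<in> I2 f1 f2 \<and> c1 \<in> I2 f1 f2" ..
qed

text \<open>
  The transition matrices between the two systems of cycles are inverse to each other modulo \<open>I\<close>,
  hence their determinants are units.
\<close>

lemma H1_basis_of_generates: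
  fixes f1 f2 :: "'a::comm_ring_1"
  assumes local: "local_ring TYPE('a)" and proper: "1 \<notin> I2 f1 f2"
    and basis: "H1_basis f1 f2 w 2" and gen: "H1_generates f1 f2 z 2"
  shows "H1_basis f1 f2 z 2"
proof -
  have w_gen: "H1_generates f1 f2 w 2" and indep: "H1_indep f1 f2 w 2"
    using basis by (simp_all add: H1_basis_def)
  obtain n00 n01 n10 n11 where
    w0: "homologous f1 f2 (w 0) (chain_comb n00 n01 (z 0) (z 1))" and
    w1: "homologous f1 f2 (w 1) (chain_comb n10 n11 (z 0) (z 1))"
    using w_gen gen by (meson H1_generates_2_iff)
  obtain m00 m01 m10 m11 where
    z0: "homologous f1 f2 (z 0) (chain_comb m00 m01 (w 0) (w 1))" and
    z1: "homologous f1 f2 (z 1) (chain_comb m10 m11 (w 0) (w 1))"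
    using w_gen gen by (meson H1_generates_2_iff)
  have via_w: "homologous f1 f2 (chain_comb (a * m00 + b * m10) (a * m01 + b * m11) (w 0) (w 1)) wi"
    if "homologous f1 f2 wi (chain_comb a b (z 0) (z 1))" for wi a b
    using homologous_trans[OF that homologous_chain_comb[OF z0 z1]]
    by (simp add: chain_comb_chain_comb homologous_sym)
  have "homologous f1 f2 (chain_comb (n00 * m00 + n01 * m10) (n00 * m01 + n01 * m11) (w 0) (w 1))
      (chain_comb 1 0 (w 0) (w 1))"
    using via_w[OF w0] by (simp add: chain_comb_unit_vectors)
  note row0 = H1_indep_coeff_diff[OF indep this]
  have "homologous f1 f2 (chain_comb (n10 * m00 + n11 * m10) (n10 * m01 + n11 * m11) (w 0) (w 1))
      (chain_comb 0 1 (w 0) (w 1))"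
    using via_w[OF w1] by (simp add: chain_comb_unit_vectors)
  note row1 = H1_indep_coeff_diff[OF indep this]
  have "(m00 * m11 - m01 * m10) dvd 1"
    using det2_unit_of_inverse_mod_I2[OF local proper] row0 row1 by simp
  with H1_indep_transfer[OF indep z0 z1] gen show ?thesis by (simp add: H1_basis_def)
qed

text \<open>Padding \<open>z\<close> with zero cycles would produce a basis containing a zero class.\<close>

lemma not_H1_generates_less_2:
  fixes f1 f2 :: "'a::comm_ring_1"
  assumes local: "local_ring TYPE('a)" and proper: "1 \<notin> I2 f1 f2"
    and basis: "H1_basis f1 f2 w 2" and "r < 2"
  shows "\<not> H1_generates f1 f2 z r"
proof
  assume gen: "H1_generates f1 f2 z r"
  define z' where "z' i = (if i < r then z i else (0, 0))" for i
  have "lincomb c z' 2 = lincomb c z r" for c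
  proof -
    consider "r = 0" | "r = 1" using \<open>r < 2\<close> by linarith
    then show ?thesis by cases (simp_all add: lincomb_def z'_def numeral_2_eq_2)
  qed
  moreover have "kz_cycle f1 f2 (z' i)" for i
    using gen by (simp add: z'_def H1_generates_def kz_cycle_def)
  ultimately have "H1_generates f1 f2 z' 2" using gen by (simp add: H1_generates_def)
  then have "H1_indep f1 f2 z' 2"
    using H1_basis_of_generates[OF local proper basis] by (simp add: H1_basis_def)
  moreover have "chain_comb 0 1 (z' 0) (z' 1) = (0, 0)"
    using \<open>r < 2\<close> by (simp add: chain_comb_def z'_def)
  ultimately have "(1::'a) \<in> I2 f1 f2"
    unfolding H1_indep_2_iff by (metis homologous_refl)
  with proper show False ..
qed

lemma H1_basis_imp_min_gens:
  fixes f1 f2 :: "'a::comm_ring_1"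
  assumes "local_ring TYPE('a)" "1 \<notin> I2 f1 f2" "H1_basis f1 f2 w 2"
  shows "H1_min_gens f1 f2 w 2"
  using assms not_H1_generates_less_2[OF assms] by (simp add: H1_min_gens_def H1_basis_def)

lemma I2_principal_if_unit_coeff:
  assumes "a * f1 + c * f2 = 0" "a dvd 1"
  shows "I2 f1 f2 = {r * f2 | r. True}"
proof -
  obtain v where "a * v = 1" using assms(2) by (metis dvdE)
  then have "f1 = (a * v) * f1" by simp
  also have "\<dots> = v * (a * f1 + c * f2) + (- (v * c)) * f2" by (simp add: algebra_simps)
  finally have f1: "f1 = (- (v * c)) * f2" using assms(1) by simp
  show ?thesis
  proof (intro set_eqI iffI)
    fix x assume "x \<in> I2 f1 f2"
    then obtain s t where "x = s * f1 + t * f2" by (auto simp: I2_iff)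
    then have "x = (t - s * v * c) * f2" using f1 by (simp add: algebra_simps)
    then show "x \<in> {r * f2 | r. True}" by blast
  qed (auto intro: I2_mult[OF generator_in_I2(2)])
qed

lemma cycle_coeffs_nonunit:
  assumes not_principal: "\<not> (\<exists>g. I2 f1 f2 = {r * g | r. True})" and "a * f1 + c * f2 = 0"
  shows "\<not> a dvd 1" "\<not> c dvd 1"
proof -
  have "I2 f2 f1 = I2 f1 f2" by (auto simp: I2_def; metis add.commute)
  moreover have "c * f2 + a * f1 = 0" using assms(2) by (simp add: add.commute)
  ultimately show "\<not> a dvd 1" "\<not> c dvd 1"
    using not_principal I2_principal_if_unit_coeff[OF assms(2)]
      I2_principal_if_unit_coeff[of c f2 a f1] by metis+
qed

definition ann_linked :: "'a::comm_ring_1 \<Rightarrow> 'a \<Rightarrow> 'a \<Rightarrow> bool" where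
  "ann_linked f1 f2 \<Delta> \<longleftrightarrow> ann (I2 f1 f2) = {\<Delta> * r | r. True} \<and> ann {\<Delta>} = I2 f1 f2"

lemma cond2_iff_basis:
  fixes f1 f2 :: "'a::comm_ring_1"
  assumes "local_ring TYPE('a)" "1 \<notin> I2 f1 f2"
  shows "cond2 f1 f2 \<longleftrightarrow> (\<exists>z. H1_basis f1 f2 z 2 \<and> ann_linked f1 f2 (kz_wedge (z 0) (z 1)))"
  unfolding cond2_def Let_def ann_linked_def
  using H1_basis_of_generates[OF assms] H1_basis_imp_min_gens[OF assms]
  by (meson H1_min_gens_def)

section \<open>The exterior algebra of \<open>H\<^sub>1(E)\<close>\<close>

definition wedge_sum :: "(nat \<Rightarrow> nat \<Rightarrow> 'a::comm_ring_1) \<Rightarrow> (nat \<Rightarrow> 'a \<times> 'a) \<Rightarrow> nat \<Rightarrow> 'a" where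
  "wedge_sum c z r = (\<Sum>i<r. \<Sum>k\<in>{i<..<r}. c i k * kz_wedge (z i) (z k))"

text \<open>The clause of \<open>qci2\<close> in degrees \<open>j \<ge> 3\<close>: \<open>\<And>\<^sup>j S\<^sup>r = 0\<close>.\<close>

definition wedge_ge3_vanishes :: "'a::comm_ring_1 \<Rightarrow> 'a \<Rightarrow> nat \<Rightarrow> bool" where
  "wedge_ge3_vanishes f1 f2 r \<longleftrightarrow> (\<forall>j\<ge>3. \<forall>c :: nat set \<Rightarrow> 'a.
     (\<forall>J. c J \<noteq> 0 \<longrightarrow> J \<subseteq> {..<r} \<and> card J = j) \<longrightarrow> (\<forall>J. c J \<in> I2 f1 f2))"

lemma qci2_iff:
  "qci2 f1 f2 \<longleftrightarrow> (\<exists>r z. H1_basis f1 f2 z r \<and>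
     (\<forall>w\<in>kz_H2 f1 f2. \<exists>c. w = wedge_sum c z r) \<and>
     (\<forall>c. wedge_sum c z r = 0 \<longrightarrow> (\<forall>i k. i < k \<and> k < r \<longrightarrow> c i k \<in> I2 f1 f2)) \<and>
     wedge_ge3_vanishes f1 f2 r)"
  by (simp add: qci2_def wedge_sum_def wedge_ge3_vanishes_def)

lemma wedge_ge3_vanishes_iff:
  fixes f1 f2 :: "'a::comm_ring_1"
  assumes "1 \<notin> I2 f1 f2"
  shows "wedge_ge3_vanishes f1 f2 r \<longleftrightarrow> r \<le> 2"
proof
  assume vanishes: "wedge_ge3_vanishes f1 f2 r"
  show "r \<le> 2"
  proof (rule ccontr)
    assume "\<not> r \<le> 2"
    define c :: "nat set \<Rightarrow> 'a" where "c J = (if J = {0, 1, 2} then 1 else 0)" for J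
    have "\<forall>J. c J \<noteq> 0 \<longrightarrow> J \<subseteq> {..<r} \<and> card J = 3"
      using \<open>\<not> r \<le> 2\<close> by (auto simp: c_def)
    then have "c {0, 1, 2} \<in> I2 f1 f2"
      using vanishes unfolding wedge_ge3_vanishes_def by blast
    with assms show False by (simp add: c_def)
  qed
next
  assume "r \<le> 2"
  show "wedge_ge3_vanishes f1 f2 r"
    unfolding wedge_ge3_vanishes_def
  proof (intro allI impI)
    fix j and c :: "nat set \<Rightarrow> 'a" and J
    assume "j \<ge> 3" and support: "\<forall>J. c J \<noteq> 0 \<longrightarrow> J \<subseteq> {..<r} \<and> card J = j"
    have "c J = 0"
    proof (rule ccontr)
      assume "c J \<noteq> 0"
      then have "J \<subseteq> {..<r}" "card J = j" using support by auto
      then have "j \<le> r" using card_mono[of "{..<r}" J] by simp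
      with \<open>r \<le> 2\<close> \<open>j \<ge> 3\<close> show False by simp
    qed
    then show "c J \<in> I2 f1 f2" by (simp add: zero_in_I2)
  qed
qed

lemma wedge_sum_2: "wedge_sum c z 2 = c 0 1 * kz_wedge (z 0) (z 1)"
proof -
  have "{..<2::nat} = {0, 1}" "{0::nat<..<2} = {1}" "{1::nat<..<2} = {}" by auto
  then show ?thesis by (simp add: wedge_sum_def)
qed

lemma wedge_sum_le_1: "r \<le> 1 \<Longrightarrow> wedge_sum c z r = 0"
  by (auto simp: wedge_sum_def intro!: sum.neutral)

lemma kz_H2_eq_ann: "kz_H2 f1 f2 = ann (I2 f1 f2)"
  by (simp add: ann_I2 kz_H2_def)

lemma kz_wedge_in_H2:
  assumes "kz_cycle f1 f2 p" "kz_cycle f1 f2 q"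
  shows "kz_wedge p q \<in> kz_H2 f1 f2"
proof -
  have "kz_wedge p q * f1 = snd q * (fst p * f1 + snd p * f2) - snd p * (fst q * f1 + snd q * f2)"
    "kz_wedge p q * f2 = fst p * (fst q * f1 + snd q * f2) - fst q * (fst p * f1 + snd p * f2)"
    by (simp_all add: kz_wedge_def algebra_simps)
  with assms show ?thesis by (simp add: kz_H2_def kz_cycle_def)
qed

lemma wedge_conditions_2_iff_ann_linked:
  assumes "kz_cycle f1 f2 (z 0)" "kz_cycle f1 f2 (z 1)"
  shows "((\<forall>w\<in>kz_H2 f1 f2. \<exists>c. w = wedge_sum c z 2) \<and>
      (\<forall>c. wedge_sum c z 2 = 0 \<longrightarrow> (\<forall>i k. i < k \<and> k < 2 \<longrightarrow> c i k \<in> I2 f1 f2)))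
    \<longleftrightarrow> ann_linked f1 f2 (kz_wedge (z 0) (z 1))"
proof -
  define \<Delta> where "\<Delta> = kz_wedge (z 0) (z 1)"
  have \<Delta>_ann: "\<Delta> \<in> ann (I2 f1 f2)"
    unfolding \<Delta>_def kz_H2_eq_ann[symmetric] using kz_wedge_in_H2[OF assms] .
  have "(\<forall>w\<in>kz_H2 f1 f2. \<exists>c. w = wedge_sum c z 2) \<longleftrightarrow> ann (I2 f1 f2) \<subseteq> {\<Delta> * r | r. True}"
  proof -
    have "(\<exists>c. w = wedge_sum c z 2) \<longleftrightarrow> (\<exists>r. w = \<Delta> * r)" for w
      unfolding wedge_sum_2 \<Delta>_def ex_fun_at_0_1[where P = "\<lambda>_ x. w = x * _"]
      by (auto simp: mult.commute intro: exI[of _ "\<lambda>_ _. _"])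
    then show ?thesis by (auto simp: kz_H2_eq_ann)
  qed
  moreover have "{\<Delta> * r | r. True} \<subseteq> ann (I2 f1 f2)"
    using \<Delta>_ann by (auto simp: ann_def mult.assoc mult.left_commute)
  moreover have "(\<forall>c. wedge_sum c z 2 = 0 \<longrightarrow> (\<forall>i k. i < k \<and> k < 2 \<longrightarrow> c i k \<in> I2 f1 f2))
      \<longleftrightarrow> ann {\<Delta>} \<subseteq> I2 f1 f2"
  proof -
    have "(\<forall>c. c 0 1 * \<Delta> = 0 \<longrightarrow> (\<forall>i k. i < k \<and> k < (2::nat) \<longrightarrow> c i k \<in> I2 f1 f2))
        \<longleftrightarrow> (\<forall>t. t * \<Delta> = 0 \<longrightarrow> t \<in> I2 f1 f2)"
    proof
      assume "\<forall>c. c 0 1 * \<Delta> = 0 \<longrightarrow> (\<forall>i k. i < k \<and> k < (2::nat) \<longrightarrow> c i k \<in> I2 f1 f2)"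
      from this[rule_format, of "\<lambda>_ _. _" 0 1] show "\<forall>t. t * \<Delta> = 0 \<longrightarrow> t \<in> I2 f1 f2" by simp
    qed (auto simp: less_2_cases_iff)
    then have "(\<forall>c. wedge_sum c z 2 = 0 \<longrightarrow> (\<forall>i k. i < k \<and> k < 2 \<longrightarrow> c i k \<in> I2 f1 f2))
        \<longleftrightarrow> (\<forall>t. t * \<Delta> = 0 \<longrightarrow> t \<in> I2 f1 f2)"
      unfolding wedge_sum_2 \<Delta>_def .
    then show ?thesis by (auto simp: ann_def mult.commute)
  qed
  moreover have "I2 f1 f2 \<subseteq> ann {\<Delta>}"
    using \<Delta>_ann by (auto simp: ann_def mult.commute)
  ultimately show ?thesis unfolding ann_linked_def \<Delta>_def[symmetric] by blast
qed

lemma qci2_iff_basis: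
  fixes f1 f2 :: "'a::comm_ring_1"
  assumes noeth: "noetherian_ring TYPE('a)" and local: "local_ring TYPE('a)"
    and proper: "1 \<notin> I2 f1 f2"
    and zero_divisors: "\<forall>x\<in>I2 f1 f2. \<exists>y. y \<noteq> 0 \<and> x * y = 0"
  shows "qci2 f1 f2 \<longleftrightarrow> (\<exists>z. H1_basis f1 f2 z 2 \<and> ann_linked f1 f2 (kz_wedge (z 0) (z 1)))"
proof
  assume "qci2 f1 f2"
  then obtain r z where basis: "H1_basis f1 f2 z r"
    and span: "\<forall>w\<in>kz_H2 f1 f2. \<exists>c. w = wedge_sum c z r"
    and indep: "\<forall>c. wedge_sum c z r = 0 \<longrightarrow> (\<forall>i k. i < k \<and> k < r \<longrightarrow> c i k \<in> I2 f1 f2)"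
    and "wedge_ge3_vanishes f1 f2 r"
    unfolding qci2_iff by blast
  then have "r \<le> 2" using wedge_ge3_vanishes_iff[OF proper] by blast
  moreover have "\<not> r \<le> 1"
  proof
    assume "r \<le> 1"
    obtain x where "x \<noteq> 0" "x * f1 = 0" "x * f2 = 0"
      using ann_I2_nonzero[OF noeth local proper zero_divisors] by blast
    then show False using span wedge_sum_le_1[OF \<open>r \<le> 1\<close>] by (auto simp: kz_H2_def)
  qed
  ultimately have "r = 2" by simp
  with basis have cycles: "kz_cycle f1 f2 (z 0)" "kz_cycle f1 f2 (z 1)"
    by (simp_all add: H1_basis_def H1_generates_2_iff)
  show "\<exists>z. H1_basis f1 f2 z 2 \<and> ann_linked f1 f2 (kz_wedge (z 0) (z 1))"
    using basis span indep wedge_conditions_2_iff_ann_linked[OF cycles] \<open>r = 2\<close> by blast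
next
  assume "\<exists>z. H1_basis f1 f2 z 2 \<and> ann_linked f1 f2 (kz_wedge (z 0) (z 1))"
  then obtain z where basis: "H1_basis f1 f2 z 2" and linked: "ann_linked f1 f2 (kz_wedge (z 0) (z 1))"
    by blast
  then have cycles: "kz_cycle f1 f2 (z 0)" "kz_cycle f1 f2 (z 1)"
    by (simp_all add: H1_basis_def H1_generates_2_iff)
  show "qci2 f1 f2"
    unfolding qci2_iff using basis linked wedge_conditions_2_iff_ann_linked[OF cycles]
      wedge_ge3_vanishes_iff[OF proper, of 2] by blast
qed

section \<open>Exactness of the complex in condition (3)\<close>

definition ker_d2_eq_im_d3 :: "'a::comm_ring_1 \<Rightarrow> 'a \<Rightarrow> 'a \<Rightarrow> 'a \<Rightarrow> 'a \<Rightarrow> 'a \<Rightarrow> bool" where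
  "ker_d2_eq_im_d3 f1 f2 a b c d \<longleftrightarrow>
     (\<forall>y1 y2 y3. (- (f2 * y1) + a * y2 + b * y3 = 0 \<and> f1 * y1 + c * y2 + d * y3 = 0) \<longleftrightarrow>
        (\<exists>x1 x2 x3 x4. y1 = - (c * x1) - d * x2 + a * x3 + b * x4 \<and>
                       y2 = f1 * x1 + f2 * x3 \<and> y3 = f1 * x2 + f2 * x4))"

definition ker_d1_eq_im_d2 :: "'a::comm_ring_1 \<Rightarrow> 'a \<Rightarrow> 'a \<Rightarrow> 'a \<Rightarrow> 'a \<Rightarrow> 'a \<Rightarrow> bool" where
  "ker_d1_eq_im_d2 f1 f2 a b c d \<longleftrightarrow>
     (\<forall>u1 u2. f1 * u1 + f2 * u2 = 0 \<longleftrightarrow>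
        (\<exists>y1 y2 y3. u1 = - (f2 * y1) + a * y2 + b * y3 \<and> u2 = f1 * y1 + c * y2 + d * y3))"

definition ker_d0_eq_im_d1 :: "'a::comm_ring_1 \<Rightarrow> 'a \<Rightarrow> 'a \<Rightarrow> bool" where
  "ker_d0_eq_im_d1 f1 f2 \<Delta> \<longleftrightarrow> (\<forall>t. \<Delta> * t = 0 \<longleftrightarrow> (\<exists>u1 u2. t = f1 * u1 + f2 * u2))"

definition ker_d1T_eq_im_d0 :: "'a::comm_ring_1 \<Rightarrow> 'a \<Rightarrow> 'a \<Rightarrow> bool" where
  "ker_d1T_eq_im_d0 f1 f2 \<Delta> \<longleftrightarrow> (\<forall>s. (f1 * s = 0 \<and> f2 * s = 0) \<longleftrightarrow> (\<exists>t. s = \<Delta> * t))"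

lemma cond3_iff:
  "cond3 f1 f2 \<longleftrightarrow> (\<exists>a b c d. a \<in> max_ideal \<and> b \<in> max_ideal \<and> c \<in> max_ideal \<and> d \<in> max_ideal \<and>
     ker_d2_eq_im_d3 f1 f2 a b c d \<and> ker_d1_eq_im_d2 f1 f2 a b c d \<and>
     ker_d0_eq_im_d1 f1 f2 (a * d - b * c) \<and> ker_d1T_eq_im_d0 f1 f2 (a * d - b * c))"
  unfolding cond3_def ker_d2_eq_im_d3_def ker_d1_eq_im_d2_def ker_d0_eq_im_d1_def ker_d1T_eq_im_d0_def
  by (rule refl)

lemma ker_d0_d1T_iff_ann_linked:
  "ker_d0_eq_im_d1 f1 f2 \<Delta> \<and> ker_d1T_eq_im_d0 f1 f2 \<Delta> \<longleftrightarrow> ann_linked f1 f2 \<Delta>"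
proof -
  have "ker_d0_eq_im_d1 f1 f2 \<Delta> \<longleftrightarrow> ann {\<Delta>} = I2 f1 f2"
    unfolding ker_d0_eq_im_d1_def set_eq_iff ann_def I2_iff by (simp add: ac_simps)
  moreover have "ker_d1T_eq_im_d0 f1 f2 \<Delta> \<longleftrightarrow> ann (I2 f1 f2) = {\<Delta> * r | r. True}"
    unfolding ker_d1T_eq_im_d0_def set_eq_iff ann_I2 by (simp add: ac_simps)
  ultimately show ?thesis unfolding ann_linked_def by blast
qed

lemma homologous_to_chain_comb_iff:
  assumes "z 0 = (a, c)" "z 1 = (b, d)"
  shows "homologous f1 f2 (u1, u2) (chain_comb y2 y3 (z 0) (z 1)) \<longleftrightarrow>
    (\<exists>y1. u1 = - (f2 * y1) + a * y2 + b * y3 \<and> u2 = f1 * y1 + c * y2 + d * y3)"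
  unfolding homologous_def kz_bdry_def chain_comb_def assms
  by (simp add: algebra_simps eq_diff_eq)

lemma kz_cycle_pair_iff: "kz_cycle f1 f2 (u1, u2) \<longleftrightarrow> f1 * u1 + f2 * u2 = 0"
  by (simp add: kz_cycle_def mult.commute)

lemma ker_d1_eq_im_d2_iff_generates:
  assumes z0: "z 0 = (a, c)" and z1: "z 1 = (b, d)"
  shows "ker_d1_eq_im_d2 f1 f2 a b c d \<longleftrightarrow> H1_generates f1 f2 z 2"
proof
  assume exact: "ker_d1_eq_im_d2 f1 f2 a b c d"
  then have image: "f1 * u1 + f2 * u2 = 0 \<longleftrightarrow> (\<exists>y2 y3. homologous f1 f2 (u1, u2) (chain_comb y2 y3 (z 0) (z 1)))"
    for u1 u2
    unfolding ker_d1_eq_im_d2_def homologous_to_chain_comb_iff[OF z0 z1] by blast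
  have "homologous f1 f2 (z 0) (chain_comb 1 0 (z 0) (z 1))"
    "homologous f1 f2 (z 1) (chain_comb 0 1 (z 0) (z 1))"
    by (simp_all add: chain_comb_unit_vectors homologous_refl)
  then have "kz_cycle f1 f2 (z 0)" "kz_cycle f1 f2 (z 1)"
    using image unfolding z0 z1 kz_cycle_pair_iff by blast+
  moreover have "\<exists>c0 c1. homologous f1 f2 p (chain_comb c0 c1 (z 0) (z 1))" if "kz_cycle f1 f2 p" for p
    using that image[of "fst p" "snd p"] by (simp add: kz_cycle_pair_iff[symmetric])
  ultimately show "H1_generates f1 f2 z 2" by (simp add: H1_generates_2_iff)
next
  assume gen: "H1_generates f1 f2 z 2"
  then have cycles: "a * f1 + c * f2 = 0" "b * f1 + d * f2 = 0"
    unfolding H1_generates_2_iff z0 z1 kz_cycle_def by simp_all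
  show "ker_d1_eq_im_d2 f1 f2 a b c d"
    unfolding ker_d1_eq_im_d2_def
  proof (intro allI iffI)
    fix u1 u2
    assume "f1 * u1 + f2 * u2 = 0"
    then obtain y2 y3 where "homologous f1 f2 (u1, u2) (chain_comb y2 y3 (z 0) (z 1))"
      using gen unfolding H1_generates_2_iff kz_cycle_pair_iff[symmetric] by blast
    then show "\<exists>y1 y2 y3. u1 = - (f2 * y1) + a * y2 + b * y3 \<and> u2 = f1 * y1 + c * y2 + d * y3"
      unfolding homologous_to_chain_comb_iff[OF z0 z1] by blast
  next
    fix u1 u2
    assume "\<exists>y1 y2 y3. u1 = - (f2 * y1) + a * y2 + b * y3 \<and> u2 = f1 * y1 + c * y2 + d * y3"
    then obtain y1 y2 y3 where u: "u1 = - (f2 * y1) + a * y2 + b * y3" "u2 = f1 * y1 + c * y2 + d * y3"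
      by blast
    have "f1 * u1 + f2 * u2 = y2 * (a * f1 + c * f2) + y3 * (b * f1 + d * f2)"
      unfolding u by (simp add: algebra_simps)
    with cycles show "f1 * u1 + f2 * u2 = 0" by simp
  qed
qed

lemma H1_indep_of_ker_d2_eq_im_d3:
  assumes z0: "z 0 = (a, c)" and z1: "z 1 = (b, d)" and exact: "ker_d2_eq_im_d3 f1 f2 a b c d"
  shows "H1_indep f1 f2 z 2"
  unfolding H1_indep_2_iff
proof (intro allI impI)
  fix c0 c1
  assume "homologous f1 f2 (chain_comb c0 c1 (z 0) (z 1)) (0, 0)"
  then obtain r where r: "c0 * a + c1 * b = - (r * f2)" "c0 * c + c1 * d = r * f1"
    unfolding homologous_def kz_bdry_def chain_comb_def z0 z1 by auto
  have "- (f2 * - r) + a * c0 + b * c1 = (c0 * a + c1 * b) + r * f2"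
    "f1 * - r + c * c0 + d * c1 = (c0 * c + c1 * d) - r * f1"
    by (simp_all add: algebra_simps)
  then have "- (f2 * - r) + a * c0 + b * c1 = 0" "f1 * - r + c * c0 + d * c1 = 0"
    unfolding r by simp_all
  then obtain x1 x2 x3 x4 where "c0 = f1 * x1 + f2 * x3" "c1 = f1 * x2 + f2 * x4"
    using exact unfolding ker_d2_eq_im_d3_def by blast
  then have "c0 = x1 * f1 + x3 * f2" "c1 = x2 * f1 + x4 * f2" by (simp_all add: mult.commute)
  then show "c0 \<in> I2 f1 f2 \<and> c1 \<in> I2 f1 f2" unfolding I2_iff by blast
qed

text \<open>
  Independence puts \<open>y\<^sub>2, y\<^sub>3\<close> into \<open>I\<close>; after subtracting an element of the image of \<open>d\<^sub>3\<close>, what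
  remains of \<open>y\<^sub>1\<close> annihilates \<open>I\<close>, so it is a multiple of \<open>\<Delta>\<close> and can be absorbed into \<open>x\<^sub>1, x\<^sub>3\<close>.
\<close>

lemma ker_d2_eq_im_d3_of_basis:
  assumes z0: "z 0 = (a, c)" and z1: "z 1 = (b, d)" and basis: "H1_basis f1 f2 z 2"
    and ann: "ann (I2 f1 f2) \<subseteq> {(a * d - b * c) * r | r. True}"
  shows "ker_d2_eq_im_d3 f1 f2 a b c d"
  unfolding ker_d2_eq_im_d3_def
proof (intro allI iffI)
  have cycles: "a * f1 + c * f2 = 0" "b * f1 + d * f2 = 0"
    using basis unfolding H1_basis_def H1_generates_2_iff z0 z1 kz_cycle_def by simp_all
  {
    fix y1 y2 y3
    assume "- (f2 * y1) + a * y2 + b * y3 = 0 \<and> f1 * y1 + c * y2 + d * y3 = 0"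
    then have e1: "- (f2 * y1) + a * y2 + b * y3 = 0" and e2: "f1 * y1 + c * y2 + d * y3 = 0" by auto
    have "homologous f1 f2 (chain_comb y2 y3 (z 0) (z 1)) (0, 0)"
      unfolding homologous_def kz_bdry_def chain_comb_def z0 z1
      by (rule exI[of _ "- y1"]) (use e1 e2 in \<open>simp add: algebra_simps eq_neg_iff_add_eq_0\<close>)
    then have "y2 \<in> I2 f1 f2" "y3 \<in> I2 f1 f2"
      using basis by (simp_all add: H1_basis_def H1_indep_2_iff)
    then obtain x1 x2 x3 x4 where y2: "y2 = f1 * x1 + f2 * x3" and y3: "y3 = f1 * x2 + f2 * x4"
      by (auto simp: I2_iff mult.commute)
    define y1' where "y1' = - (c * x1) - d * x2 + a * x3 + b * x4"
    have "(y1 - y1') * f1 = (f1 * y1 + c * y2 + d * y3) - x3 * (a * f1 + c * f2) - x4 * (b * f1 + d * f2)"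
      unfolding y1'_def y2 y3 by (simp add: algebra_simps)
    then have "(y1 - y1') * f1 = 0" unfolding e2 cycles by simp
    moreover have "(y1 - y1') * f2 = x1 * (a * f1 + c * f2) + x2 * (b * f1 + d * f2) - (- (f2 * y1) + a * y2 + b * y3)"
      unfolding y1'_def y2 y3 by (simp add: algebra_simps)
    then have "(y1 - y1') * f2 = 0" unfolding e1 cycles by simp
    ultimately have "y1 - y1' \<in> ann (I2 f1 f2)" by (simp add: ann_I2)
    then obtain t where t: "y1 - y1' = (a * d - b * c) * t" using ann by blast
    have "y1 = - (c * (x1 + b * t)) - d * x2 + a * (x3 + d * t) + b * x4"
      using t unfolding y1'_def by (simp add: algebra_simps eq_diff_eq)
    moreover have "f1 * (x1 + b * t) + f2 * (x3 + d * t) = y2 + t * (b * f1 + d * f2)"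
      unfolding y2 by (simp add: algebra_simps)
    then have "y2 = f1 * (x1 + b * t) + f2 * (x3 + d * t)" unfolding cycles by simp
    ultimately show "\<exists>x1 x2 x3 x4. y1 = - (c * x1) - d * x2 + a * x3 + b * x4 \<and>
        y2 = f1 * x1 + f2 * x3 \<and> y3 = f1 * x2 + f2 * x4"
      using y3 by blast
  next
    fix y1 y2 y3
    assume "\<exists>x1 x2 x3 x4. y1 = - (c * x1) - d * x2 + a * x3 + b * x4 \<and>
        y2 = f1 * x1 + f2 * x3 \<and> y3 = f1 * x2 + f2 * x4"
    then obtain x1 x2 x3 x4 where y: "y1 = - (c * x1) - d * x2 + a * x3 + b * x4"
      "y2 = f1 * x1 + f2 * x3" "y3 = f1 * x2 + f2 * x4" by blast
    have "- (f2 * y1) + a * y2 + b * y3 = x1 * (a * f1 + c * f2) + x2 * (b * f1 + d * f2)"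
      "f1 * y1 + c * y2 + d * y3 = x3 * (a * f1 + c * f2) + x4 * (b * f1 + d * f2)"
      unfolding y by (simp_all add: algebra_simps)
    with cycles show "- (f2 * y1) + a * y2 + b * y3 = 0 \<and> f1 * y1 + c * y2 + d * y3 = 0" by simp
  }
qed

lemma kz_wedge_pairs: "kz_wedge (a, c) (b, d) = a * d - b * c"
  by (simp add: kz_wedge_def mult.commute)

lemma cond3_iff_basis:
  assumes not_principal: "\<not> (\<exists>g. I2 f1 f2 = {r * g | r. True})"
  shows "cond3 f1 f2 \<longleftrightarrow> (\<exists>z. H1_basis f1 f2 z 2 \<and> ann_linked f1 f2 (kz_wedge (z 0) (z 1)))"
proof
  assume "cond3 f1 f2"
  then obtain a b c d where d3: "ker_d2_eq_im_d3 f1 f2 a b c d" and d2: "ker_d1_eq_im_d2 f1 f2 a b c d"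
    and d1: "ker_d0_eq_im_d1 f1 f2 (a * d - b * c)" and d0: "ker_d1T_eq_im_d0 f1 f2 (a * d - b * c)"
    unfolding cond3_iff by blast
  define z :: "nat \<Rightarrow> _" where "z i = (if i = 0 then (a, c) else (b, d))" for i
  have z0: "z 0 = (a, c)" and z1: "z 1 = (b, d)" by (simp_all add: z_def)
  have "H1_basis f1 f2 z 2"
    using ker_d1_eq_im_d2_iff_generates[OF z0 z1] d2 H1_indep_of_ker_d2_eq_im_d3[OF z0 z1 d3]
    by (simp add: H1_basis_def)
  moreover have "ann_linked f1 f2 (kz_wedge (z 0) (z 1))"
    unfolding z0 z1 kz_wedge_pairs using ker_d0_d1T_iff_ann_linked d1 d0 by blast
  ultimately show "\<exists>z. H1_basis f1 f2 z 2 \<and> ann_linked f1 f2 (kz_wedge (z 0) (z 1))" by blast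
next
  assume "\<exists>z. H1_basis f1 f2 z 2 \<and> ann_linked f1 f2 (kz_wedge (z 0) (z 1))"
  then obtain z where basis: "H1_basis f1 f2 z 2" and linked: "ann_linked f1 f2 (kz_wedge (z 0) (z 1))"
    by blast
  obtain a c where z0: "z 0 = (a, c)" by (cases "z 0")
  obtain b d where z1: "z 1 = (b, d)" by (cases "z 1")
  have "a * f1 + c * f2 = 0" "b * f1 + d * f2 = 0"
    using basis unfolding H1_basis_def H1_generates_2_iff z0 z1 kz_cycle_def by simp_all
  from cycle_coeffs_nonunit[OF not_principal this(1)] cycle_coeffs_nonunit[OF not_principal this(2)]
  have "a \<in> max_ideal \<and> b \<in> max_ideal \<and> c \<in> max_ideal \<and> d \<in> max_ideal"
    by (simp add: max_ideal_def)
  moreover have "ker_d0_eq_im_d1 f1 f2 (a * d - b * c) \<and> ker_d1T_eq_im_d0 f1 f2 (a * d - b * c)"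
    using linked ker_d0_d1T_iff_ann_linked unfolding z0 z1 kz_wedge_pairs by blast
  moreover have "ker_d2_eq_im_d3 f1 f2 a b c d"
    using linked unfolding ann_linked_def z0 z1 kz_wedge_pairs
    by (intro ker_d2_eq_im_d3_of_basis[OF z0 z1 basis]) simp
  moreover have "ker_d1_eq_im_d2 f1 f2 a b c d"
    using basis ker_d1_eq_im_d2_iff_generates[OF z0 z1] by (simp add: H1_basis_def)
  ultimately show "cond3 f1 f2" unfolding cond3_iff by blast
qed

theorem lemma1p7:
  fixes f1 f2 :: "'a::comm_ring_1"
  assumes noeth: "noetherian_ring TYPE('a)"
    and local: "local_ring TYPE('a)"
    and nu2: "\<not> (\<exists>g. I2 f1 f2 = {r * g | r. True})"
    and grade0: "\<not> (\<exists>x\<in>I2 f1 f2. (\<forall>y. x * y = 0 \<longrightarrow> y = 0) \<and> \<not> x dvd 1)"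
  shows "(qci2 f1 f2 \<longleftrightarrow> cond2 f1 f2) \<and> (cond2 f1 f2 \<longleftrightarrow> cond3 f1 f2)"
proof -
  have proper: "1 \<notin> I2 f1 f2" by (rule one_notin_I2_if_not_principal[OF nu2])
  have zero_divisors: "\<forall>x\<in>I2 f1 f2. \<exists>y. y \<noteq> 0 \<and> x * y = 0"
  proof
    fix x assume "x \<in> I2 f1 f2"
    with grade0 I2_not_unit[OF proper this] have "\<not> (\<forall>y. x * y = 0 \<longrightarrow> y = 0)" by blast
    then show "\<exists>y. y \<noteq> 0 \<and> x * y = 0" by blast
  qed
  show ?thesis
    unfolding qci2_iff_basis[OF noeth local proper zero_divisors] cond2_iff_basis[OF local proper]
      cond3_iff_basis[OF nu2]
    by simp
qed

end
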